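(* Let $(x(t),v(t))$, $t\in[0,T]$, be the trajectory generated by an optimal control $f^*\in\mathcal F$ of the problem $\mathcal Q_N(0,T,x_0,v_0)$, and write $f^*(t)=(f^*(t,x_1(t),v_1(t)),\dots,f^*(t,x_N(t),v_N(t)))$. Then for every $a\in[0,T]$, $$\int_a^T \|v(t)-\bar v\|_N^2+\lambda\|f^*(t)\|_N^2\,dt\;\le\;\sqrt{\lambda}\,\|v(a)-\bar v\|_N^2 .$$
   Context: Fix integers $D\ge1$, $N\ge1$, a horizon $T>0$, a weight $\lambda>0$ and a target velocity $\bar v\in\mathbb R^D$. The interaction kernel $\Psi:\mathbb R^D\times\mathbb R^D\to\mathbb R$ is Lipschitz continuous, symmetric ($\Psi(x,y)=\Psi(y,x)$), nonnegative and bounded ($0\le\Psi\le C_\Psi$). The admissible control set $\mathcal F$ consists of Carathéodory functions $f:[0,T]\times\mathbb R^{2D}\to\mathbb R^D$ with $f(t,\cdot)\in W^{1,\infty}_{loc}(\mathbb R^{2D})$ and $|f(t,0)|+\|f(t,\cdot)\|_{Lip}\le C_B$ for a.e. $t$, where the constant $C_B$ is assumed large enough ($C_B\ge\lambda^{-1/2}(1+|\bar v|)$) that the linear feedback $(x,v)\mapsto-\lambda^{-1/2}(v-\bar v)$ is admissible; admissible controls on a subinterval $[a,T]$ are defined analogously. Given $f\in\mathcal F$ and initial data $x_0=(x_{10},\dots,x_{N0})$, $v_0=(v_{10},\dots,v_{N0})\in(\mathbb R^D)^N$, the state $x(t)=(x_i(t))_{i=1}^N$, $v(t)=(v_i(t))_{i=1}^N$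 solves $\dot x_i=v_i$, $\dot v_i=\frac1N\sum_{j=1}^N\Psi(x_i,x_j)(v_j-v_i)+f_i(t)$, with $f_i(t):=f(t,x_i(t),v_i(t))$, $x_i(0)=x_{i0}$, $v_i(0)=v_{i0}$. For $w=(w_1,\dots,w_N)\in(\mathbb R^D)^N$ set $\|w\|_N^2=\frac1N\sum_{i=1}^N|w_i|^2$, and write $\|v-\bar v\|_N^2=\frac1N\sum_i|v_i-\bar v|^2$, $f(t)=(f_1(t),\dots,f_N(t))$. The problem $\mathcal Q_N(0,T,x_0,v_0)$ is to minimize $J_N(f)=\int_0^T\|v(t)-\bar v\|_N^2+\lambda\|f(t)\|_N^2\,dt$ over $f\in\mathcal F$; a minimizer is an optimal control and its trajectory the optimal solution. The problem $\mathcal Q_N(a,T,x(a),v(a))$ on $[a,T]$ with data at time $a$ is defined analogously. *)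

theory Defs
  imports "HOL-Analysis.Analysis"
begin

definition sqnormN :: "nat \<Rightarrow> (nat \<Rightarrow> 'a::real_normed_vector) \<Rightarrow> real" where
  "sqnormN N w = (\<Sum>i<N. (norm (w i))\<^sup>2) / real N"

definition admissible ::
  "real \<Rightarrow> real \<Rightarrow> real \<Rightarrow> (real \<Rightarrow> 'a \<times> 'a \<Rightarrow> 'a::euclidean_space) \<Rightarrow> bool" where
  "admissible CB a T f \<longleftrightarrow>
     (\<forall>z. (\<lambda>t. f t z) \<in> borel_measurable (lebesgue_on {a..T})) \<and>
     (AE t in lebesgue_on {a..T}. \<exists>L. norm (f t 0) + L \<le> CB \<and> L-lipschitz_on UNIV (f t))"

definition cs_rhs ::
  "('a \<Rightarrow> 'a \<Rightarrow> real) \<Rightarrow> nat \<Rightarrow> (real \<Rightarrow> 'a \<times> 'a \<Rightarrow> 'a::euclidean_space)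
    \<Rightarrow> (nat \<Rightarrow> real \<Rightarrow> 'a) \<Rightarrow> (nat \<Rightarrow> real \<Rightarrow> 'a) \<Rightarrow> nat \<Rightarrow> real \<Rightarrow> 'a" where
  "cs_rhs \<Psi> N f x v i t =
     (1 / real N) *\<^sub>R (\<Sum>j<N. \<Psi> (x i t) (x j t) *\<^sub>R (v j t - v i t)) + f t (x i t, v i t)"

text \<open>(Caratheodory / absolutely continuous) solution on [a,T] with data (x0,v0) at time a.\<close>

definition is_trajectory ::
  "('a \<Rightarrow> 'a \<Rightarrow> real) \<Rightarrow> nat \<Rightarrow> (real \<Rightarrow> 'a \<times> 'a \<Rightarrow> 'a::euclidean_space) \<Rightarrow> real \<Rightarrow> real
    \<Rightarrow> (nat \<Rightarrow> 'a) \<Rightarrow> (nat \<Rightarrow> 'a) \<Rightarrow> (nat \<Rightarrow> real \<Rightarrow> 'a) \<Rightarrow> (nat \<Rightarrow> real \<Rightarrow> 'a) \<Rightarrow> bool" where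
  "is_trajectory \<Psi> N f a T x0 v0 x v \<longleftrightarrow>
     (\<forall>i<N. x i a = x0 i \<and> v i a = v0 i \<and>
        v i absolutely_integrable_on {a..T} \<and>
        cs_rhs \<Psi> N f x v i absolutely_integrable_on {a..T} \<and>
        (\<forall>t\<in>{a..T}. (v i has_integral (x i t - x i a)) {a..t} \<and>
                      (cs_rhs \<Psi> N f x v i has_integral (v i t - v i a)) {a..t}))"

definition cost ::
  "real \<Rightarrow> 'a \<Rightarrow> nat \<Rightarrow> (real \<Rightarrow> 'a \<times> 'a \<Rightarrow> 'a::euclidean_space)
    \<Rightarrow> (nat \<Rightarrow> real \<Rightarrow> 'a) \<Rightarrow> (nat \<Rightarrow> real \<Rightarrow> 'a) \<Rightarrow> real \<Rightarrow> real \<Rightarrow> real" where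
  "cost lam vbar N f x v a T =
     integral {a..T} (\<lambda>t. sqnormN N (\<lambda>i. v i t - vbar) + lam * sqnormN N (\<lambda>i. f t (x i t, v i t)))"

definition optimal_control ::
  "('a \<Rightarrow> 'a \<Rightarrow> real) \<Rightarrow> real \<Rightarrow> real \<Rightarrow> 'a \<Rightarrow> nat \<Rightarrow> real \<Rightarrow> real
    \<Rightarrow> (nat \<Rightarrow> 'a) \<Rightarrow> (nat \<Rightarrow> 'a) \<Rightarrow> (real \<Rightarrow> 'a \<times> 'a \<Rightarrow> 'a::euclidean_space)
    \<Rightarrow> (nat \<Rightarrow> real \<Rightarrow> 'a) \<Rightarrow> (nat \<Rightarrow> real \<Rightarrow> 'a) \<Rightarrow> bool" where
  "optimal_control \<Psi> CB lam vbar N a T x0 v0 f x v \<longleftrightarrow>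
     admissible CB a T f \<and> is_trajectory \<Psi> N f a T x0 v0 x v \<and>
     (\<forall>g y w. admissible CB a T g \<and> is_trajectory \<Psi> N g a T x0 v0 y w \<longrightarrow>
        cost lam vbar N f x v a T \<le> cost lam vbar N g y w a T)"

end

theory Submission
  imports Defs
begin

text \<open>Let \<open>k = 1 / sqrt \<lambda>\<close>. Compare the optimal control with the control that follows it up to
  time \<open>a\<close> and then switches to the linear feedback \<open>- k (v - vbar)\<close>: both cost the same on
  \<open>[0, a]\<close>, so by optimality the optimal cost on \<open>[a, T]\<close> is at most that of the feedback. Under
  the feedback, symmetry and nonnegativity of \<open>\<Psi>\<close> make the alignment term dissipative, so the
  energy \<open>E = \<parallel>v - vbar\<parallel>\<^sub>N\<^sup>2\<close> satisfies \<open>E' \<le> - 2 k E\<close>; as \<open>\<lambda> k\<^sup>2 = 1\<close> the running cost of the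
  feedback is \<open>2 E\<close>, and \<open>\<integral>\<^sub>a\<^sup>T 2 E \<le> E(a) / k = sqrt \<lambda> E(a)\<close>.

  The feedback trajectory is constructed by clipping the velocity differences in the alignment term
  at a radius above the a priori bound that the energy estimate gives; the clipped system is globally
  Lipschitz and is solved by Picard iteration, and the energy estimate shows that the clipping is
  never active.\<close>

section \<open>Picard iteration for Lipschitz systems\<close>

lemma continuous_on_compose_sum_Lipschitz:
  fixes G :: "(nat \<Rightarrow> 'b::real_normed_vector) \<Rightarrow> 'c::real_normed_vector"
  assumes lip: "\<And>X Y. norm (G X - G Y) \<le> L * (\<Sum>j<N. norm (X j - Y j))"
    and cont: "\<And>j. j < N \<Longrightarrow> continuous_on S (f j)"
  shows "continuous_on S (\<lambda>s. G (\<lambda>j. f j s))"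
  unfolding continuous_on_def
proof (intro ballI)
  fix x assume x: "x \<in> S"
  have "((\<lambda>s. L * (\<Sum>j<N. norm (f j s - f j x))) \<longlongrightarrow> L * (\<Sum>j<N. norm (f j x - f j x)))
      (at x within S)"
    using cont x by (intro tendsto_intros) (auto simp: continuous_on_def)
  then have bound: "((\<lambda>s. L * (\<Sum>j<N. norm (f j s - f j x))) \<longlongrightarrow> 0) (at x within S)"
    by simp
  have "((\<lambda>s. G (\<lambda>j. f j s) - G (\<lambda>j. f j x)) \<longlongrightarrow> 0) (at x within S)"
    by (rule Lim_null_comparison[OF always_eventually bound]) (intro allI lip)
  then show "((\<lambda>s. G (\<lambda>j. f j s)) \<longlongrightarrow> G (\<lambda>j. f j x)) (at x within S)"
    using Lim_null by blast
qed

lemma has_integral_exp_mult: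
  fixes M :: real
  assumes "M \<noteq> 0" "a \<le> c"
  shows "((\<lambda>s. exp (M * s)) has_integral (exp (M * c) - exp (M * a)) / M) {a..c}"
proof -
  have "((\<lambda>s. exp (M * s)) has_integral (exp (M * c) / M - exp (M * a) / M)) {a..c}"
  proof (rule fundamental_theorem_of_calculus[OF assms(2)])
    fix x :: real
    have "((\<lambda>s. exp (M * s) / M) has_real_derivative exp (M * x)) (at x within {a..c})"
      using assms(1) by (auto intro!: derivative_eq_intros)
    then show "((\<lambda>s. exp (M * s) / M) has_vector_derivative exp (M * x)) (at x within {a..c})"
      by (simp add: has_real_derivative_iff_has_vector_derivative)
  qed
  then show ?thesis by (simp add: diff_divide_distrib)
qed

text \<open>With respect to the weighted sup norm \<open>sup\<^sub>s exp (- M s) norm (u s)\<close>, integrating a Lipschitz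
  function of \<open>u\<close> from \<open>a\<close> is Lipschitz with constant \<open>L N / M\<close>.\<close>

lemma integral_compose_diff_exp_weighted_bound:
  fixes G :: "(nat \<Rightarrow> 'b) \<Rightarrow> 'b::euclidean_space"
  assumes lip: "\<And>X Y. norm (G X - G Y) \<le> L * (\<Sum>j<N. norm (X j - Y j))" and L: "L \<ge> 0"
    and M: "M > 0" and c: "a \<le> c" and D: "D \<ge> 0"
    and cont: "\<And>j. j < N \<Longrightarrow> continuous_on {a..c} (U j)" "\<And>j. j < N \<Longrightarrow> continuous_on {a..c} (U' j)"
    and close: "\<And>j s. norm (U j s - U' j s) \<le> exp (M * s) * D"
  shows "exp (- M * c) * norm (integral {a..c} (\<lambda>s. G (\<lambda>j. U j s)) - integral {a..c} (\<lambda>s. G (\<lambda>j. U' j s)))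
    \<le> L * real N * D / M"
proof -
  define K where "K = L * real N * D"
  have K: "K \<ge> 0"
    using L D by (simp add: K_def)
  have "continuous_on {a..c} (\<lambda>s. G (\<lambda>j. U j s))" "continuous_on {a..c} (\<lambda>s. G (\<lambda>j. U' j s))"
    by (rule continuous_on_compose_sum_Lipschitz[OF lip], rule cont, assumption)+
  then have int: "(\<lambda>s. G (\<lambda>j. U j s)) integrable_on {a..c}" "(\<lambda>s. G (\<lambda>j. U' j s)) integrable_on {a..c}"
    by (auto intro: integrable_continuous_interval)
  have bound: "norm (G (\<lambda>j. U j s) - G (\<lambda>j. U' j s)) \<le> K * exp (M * s)" for s
  proof -
    have "L * (\<Sum>j<N. norm (U j s - U' j s)) \<le> L * (\<Sum>j<N. exp (M * s) * D)"
      using L close by (intro mult_left_mono sum_mono) auto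
    then show ?thesis
      using lip[of "\<lambda>j. U j s" "\<lambda>j. U' j s"] by (simp add: K_def algebra_simps)
  qed
  have exp_int: "((\<lambda>s. K * exp (M * s)) has_integral K * ((exp (M * c) - exp (M * a)) / M)) {a..c}"
    using M c by (intro has_integral_mult_right has_integral_exp_mult) auto
  have "norm (integral {a..c} (\<lambda>s. G (\<lambda>j. U j s)) - integral {a..c} (\<lambda>s. G (\<lambda>j. U' j s)))
      = norm (integral {a..c} (\<lambda>s. G (\<lambda>j. U j s) - G (\<lambda>j. U' j s)))"
    using int by (simp add: integral_diff)
  also have "\<dots> \<le> integral {a..c} (\<lambda>s. K * exp (M * s))"
    by (rule integral_norm_bound_integral[OF integrable_diff[OF int] has_integral_integrable[OF exp_int]])
      (rule bound)
  also have "\<dots> = K * ((exp (M * c) - exp (M * a)) / M)"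
    by (rule integral_unique[OF exp_int])
  also have "\<dots> \<le> K * (exp (M * c) / M)"
    using K M by (intro mult_left_mono divide_right_mono) auto
  finally show ?thesis
    using M by (simp add: K_def exp_minus field_simps)
qed

text \<open>The library proves this instance only for a metric domain; the proof needs no metric.\<close>

lemma complete_UNIV_bcontfun:
  "complete (UNIV :: ('a::topological_space \<Rightarrow>\<^sub>C 'b::complete_space) set)"
proof (rule completeI)
  fix f :: "nat \<Rightarrow> ('a, 'b) bcontfun"
  assume "Cauchy f"
  then obtain g where "uniform_limit UNIV f g sequentially"
    using uniformly_convergent_eq_cauchy[of "\<lambda>_. True" f]
    unfolding Cauchy_def uniform_limit_sequentially_iff
    by (metis dist_fun_lt_imp_dist_val_lt)
  then show "\<exists>l\<in>UNIV. f \<longlonglongrightarrow> l"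
    using uniform_limit_bcontfunE[OF _ sequentially_bot] by blast
qed

lemma clamp_in_bcontfun:
  fixes g :: "real \<Rightarrow> 'b::real_normed_vector"
  assumes "continuous_on {a..T} g" "a \<le> T"
  shows "(\<lambda>t. g (max a (min T t))) \<in> bcontfun"
proof -
  have "continuous_on UNIV (\<lambda>t. g (max a (min T t)))"
    using assms by (intro continuous_on_compose2[OF assms(1)] continuous_intros) auto
  moreover have "range (\<lambda>t. g (max a (min T t))) \<subseteq> g ` {a..T}"
    using assms(2) by auto
  moreover have "bounded (g ` {a..T})"
    by (intro compact_imp_bounded compact_continuous_image assms(1) compact_Icc)
  ultimately show ?thesis
    by (auto simp: bcontfun_def intro: bounded_subset)
qed

lemma truncation_in_bcontfun:
  fixes F :: "nat \<Rightarrow> 'a::topological_space \<Rightarrow>\<^sub>C 'b::real_normed_vector"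
  shows "(\<lambda>i. if i < N then F i else 0) \<in> bcontfun"
proof -
  have "range (\<lambda>i. if i < N then F i else 0) \<subseteq> F ` {..<N} \<union> {0}"
    by auto
  moreover have "bounded (F ` {..<N} \<union> {0})"
    by (intro finite_imp_bounded) auto
  ultimately show ?thesis
    by (auto simp: bcontfun_def intro: bounded_subset)
qed

text \<open>The Picard operator of \<open>u\<^sub>i\<acute> = G\<^sub>i u\<close>, \<open>u(a) = u_init\<close>, in the weighted unknown
  \<open>W = exp (- M t) u\<close>. Functions on \<open>[a, T]\<close> are extended to \<open>\<real>\<close> by clamping the argument and
  the components \<open>i \<ge> N\<close> are set to zero, so that the operator acts on a complete space.\<close>

definition weighted_picard ::
  "real \<Rightarrow> real \<Rightarrow> real \<Rightarrow> nat \<Rightarrow> (nat \<Rightarrow> (nat \<Rightarrow> 'b) \<Rightarrow> 'b) \<Rightarrow> (nat \<Rightarrow> 'b)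
    \<Rightarrow> (nat \<Rightarrow>\<^sub>C (real \<Rightarrow>\<^sub>C 'b)) \<Rightarrow> nat \<Rightarrow>\<^sub>C (real \<Rightarrow>\<^sub>C 'b::euclidean_space)"
where
  "weighted_picard M a T N G u_init W = Bcontfun (\<lambda>i. if i < N then Bcontfun (\<lambda>t.
     exp (- M * max a (min T t)) *\<^sub>R
       (u_init i + integral {a..max a (min T t)} (\<lambda>s. G i (\<lambda>j. exp (M * s) *\<^sub>R W j s))))
     else 0)"

lemma weighted_picard_apply:
  fixes G :: "nat \<Rightarrow> (nat \<Rightarrow> 'b::euclidean_space) \<Rightarrow> 'b"
  assumes aT: "a \<le> T"
    and lip: "\<And>i X Y. i < N \<Longrightarrow> norm (G i X - G i Y) \<le> L * (\<Sum>j<N. norm (X j - Y j))"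
  shows "weighted_picard M a T N G u_init W i t = (if i < N then
    exp (- M * max a (min T t)) *\<^sub>R
      (u_init i + integral {a..max a (min T t)} (\<lambda>s. G i (\<lambda>j. exp (M * s) *\<^sub>R W j s)))
    else 0)"
proof -
  have W_cont: "continuous_on S (\<lambda>s. exp (M * s) *\<^sub>R W j s)" for j S
    by (intro continuous_intros) auto
  have "continuous_on {a..T} (\<lambda>c. exp (- M * c) *\<^sub>R
      (u_init i + integral {a..c} (\<lambda>s. G i (\<lambda>j. exp (M * s) *\<^sub>R W j s))))" if "i < N" for i
    by (intro continuous_intros indefinite_integral_continuous_1 integrable_continuous_interval
        continuous_on_compose_sum_Lipschitz[OF lip[OF that] W_cont])
  from clamp_in_bcontfun[OF this aT] show ?thesis
    using truncation_in_bcontfun[of N "\<lambda>i. Bcontfun (\<lambda>t. exp (- M * max a (min T t)) *\<^sub>R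
      (u_init i + integral {a..max a (min T t)} (\<lambda>s. G i (\<lambda>j. exp (M * s) *\<^sub>R W j s))))"]
    by (simp add: weighted_picard_def Bcontfun_inverse)
qed

lemma weighted_picard_contraction:
  fixes G :: "nat \<Rightarrow> (nat \<Rightarrow> 'b::euclidean_space) \<Rightarrow> 'b"
  assumes aT: "a \<le> T" and L: "L \<ge> 0" and M: "M > 0"
    and lip: "\<And>i X Y. i < N \<Longrightarrow> norm (G i X - G i Y) \<le> L * (\<Sum>j<N. norm (X j - Y j))"
  shows "dist (weighted_picard M a T N G u_init W) (weighted_picard M a T N G u_init W')
    \<le> L * real N / M * dist W W'"
proof (intro dist_bound)
  fix i t
  define D where "D = dist W W'"
  define c where "c = max a (min T t)"
  have c: "a \<le> c" and D: "D \<ge> 0"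
    using aT by (auto simp: c_def D_def)
  have W_cont: "continuous_on S (\<lambda>s. exp (M * s) *\<^sub>R V j s)" for V :: "nat \<Rightarrow>\<^sub>C (real \<Rightarrow>\<^sub>C 'b)" and j S
    by (intro continuous_intros) auto
  have close: "norm (exp (M * s) *\<^sub>R W j s - exp (M * s) *\<^sub>R W' j s) \<le> exp (M * s) * D" for j s
    using order_trans[OF dist_bounded[where f="W j" and g="W' j" and x=s]
        dist_bounded[where f=W and g=W' and x=j]]
    by (simp add: D_def dist_norm mult_left_mono flip: scaleR_diff_right)
  show "dist (weighted_picard M a T N G u_init W i t) (weighted_picard M a T N G u_init W' i t)
    \<le> L * real N / M * dist W W'"
  proof (cases "i < N")
    case False
    then show ?thesis
      using L M by (simp add: weighted_picard_apply[OF aT lip])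
  next
    case i: True
    have "exp (- M * c) * norm (integral {a..c} (\<lambda>s. G i (\<lambda>j. exp (M * s) *\<^sub>R W j s))
        - integral {a..c} (\<lambda>s. G i (\<lambda>j. exp (M * s) *\<^sub>R W' j s))) \<le> L * real N * D / M"
      using M c D W_cont W_cont close by (rule integral_compose_diff_exp_weighted_bound[OF lip[OF i] L])
    then show ?thesis
      using i by (simp add: weighted_picard_apply[OF aT lip] dist_norm D_def c_def flip: scaleR_diff_right)
  qed
qed

text \<open>By the contraction principle with \<open>M = L N + 1\<close>, the weighted Picard operator has a fixed
  point \<open>W\<close>, and \<open>u = exp (M t) W\<close> solves the integral equation.\<close>

lemma Lipschitz_integral_equation_solvable:
  fixes G :: "nat \<Rightarrow> (nat \<Rightarrow> 'b::euclidean_space) \<Rightarrow> 'b" and u_init :: "nat \<Rightarrow> 'b" and a T :: real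
  assumes aT: "a \<le> T" and L: "L \<ge> 0"
    and lip: "\<And>i X Y. i < N \<Longrightarrow> norm (G i X - G i Y) \<le> L * (\<Sum>j<N. norm (X j - Y j))"
  obtains u where "\<And>i. i < N \<Longrightarrow> continuous_on {a..T} (u i)"
    and "\<And>i t. i < N \<Longrightarrow> t \<in> {a..T} \<Longrightarrow> u i t = u_init i + integral {a..t} (\<lambda>s. G i (\<lambda>j. u j s))"
proof -
  define M :: real where "M = L * real N + 1"
  have "L * real N \<ge> 0"
    using L by simp
  then have M: "M > 0" "0 \<le> L * real N / M" "L * real N / M < 1"
    by (auto simp: M_def divide_less_eq)
  have "dist (weighted_picard M a T N G u_init W) (weighted_picard M a T N G u_init W')
      \<le> L * real N / M * dist W W'" for W W'
    by (rule weighted_picard_contraction[where G=G, OF aT L M(1) lip])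
  then obtain W where W: "weighted_picard M a T N G u_init W = W"
    using Banach_fix[OF complete_UNIV_bcontfun UNIV_not_empty, of "L * real N / M" "weighted_picard M a T N G u_init"]
      M(2,3) by auto
  show thesis
  proof (rule that)
    show "continuous_on {a..T} (\<lambda>t. exp (M * t) *\<^sub>R W i t)" for i
      by (intro continuous_intros) auto
    fix i t assume "i < N" "t \<in> {a..T}"
    then have "W i t = exp (- M * t) *\<^sub>R (u_init i + integral {a..t} (\<lambda>s. G i (\<lambda>j. exp (M * s) *\<^sub>R W j s)))"
      using weighted_picard_apply[where G=G, OF aT lip, of M u_init W i t] W by simp
    then show "exp (M * t) *\<^sub>R W i t = u_init i + integral {a..t} (\<lambda>s. G i (\<lambda>j. exp (M * s) *\<^sub>R W j s))"
      by (simp add: exp_minus)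
  qed
qed

section \<open>The clipped Cucker--Smale system\<close>

text \<open>The alignment term \<open>\<Psi>(x\<^sub>i, x\<^sub>j) (v\<^sub>j - v\<^sub>i)\<close> is not globally Lipschitz; replacing
  \<open>v\<^sub>j - v\<^sub>i\<close> by its radial projection onto a ball cures this.\<close>

definition clip :: "real \<Rightarrow> 'a::real_normed_vector \<Rightarrow> 'a" where
  "clip R d = (if norm d \<le> R then d else (R / norm d) *\<^sub>R d)"

lemma norm_clip_le: "R \<ge> 0 \<Longrightarrow> norm (clip R d) \<le> R"
  by (auto simp: clip_def)

lemma clip_eq_self: "norm d \<le> R \<Longrightarrow> clip R d = d"
  by (simp add: clip_def)

lemma clip_minus: "clip R (- d) = - clip R d"
  by (simp add: clip_def)

lemma inner_clip_nonneg: "R \<ge> 0 \<Longrightarrow> 0 \<le> inner d (clip R (d::'a::real_inner))"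
  by (auto simp: clip_def)

lemma clip_eq_closest_point:
  fixes d :: "'a::euclidean_space"
  assumes R: "R \<ge> 0"
  shows "clip R d = closest_point (cball 0 R) d"
proof (rule closest_point_unique[OF convex_cball closed_cball])
  show "clip R d \<in> cball 0 R"
    using norm_clip_le[OF R] by simp
  show "\<forall>z\<in>cball 0 R. dist d (clip R d) \<le> dist d z"
  proof
    fix z :: 'a assume "z \<in> cball 0 R"
    then have z: "norm z \<le> R" by simp
    show "dist d (clip R d) \<le> dist d z"
    proof (cases "norm d \<le> R")
      case False
      then have nonneg: "0 \<le> 1 - R / norm d"
        using R by (simp add: divide_le_eq)
      have "d - clip R d = (1 - R / norm d) *\<^sub>R d"
        using False by (simp add: clip_def scaleR_diff_left)
      then have "dist d (clip R d) = (1 - R / norm d) * norm d"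
        by (simp only: dist_norm norm_scaleR abs_of_nonneg[OF nonneg])
      also have "\<dots> = norm d - R"
        using False R by (auto simp: algebra_simps)
      also have "\<dots> \<le> norm d - norm z"
        using z by simp
      also have "\<dots> \<le> dist d z"
        by (simp add: dist_norm norm_triangle_ineq2)
      finally show ?thesis .
    qed (simp add: clip_def)
  qed
qed

lemma dist_clip_le:
  fixes x y :: "'a::euclidean_space"
  assumes "R \<ge> 0"
  shows "dist (clip R x) (clip R y) \<le> dist x y"
  using closest_point_lipschitz[OF convex_cball closed_cball, of 0 R x y] assms
  by (simp add: clip_eq_closest_point)

lemma norm_interaction_diff_le:
  fixes \<Psi> :: "'a::euclidean_space \<Rightarrow> 'a \<Rightarrow> real" and p q v w p' q' v' w' :: 'a
  assumes lip: "LP-lipschitz_on UNIV (\<lambda>z. \<Psi> (fst z) (snd z))"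
    and bnd: "\<And>y z. 0 \<le> \<Psi> y z \<and> \<Psi> y z \<le> CP" and R: "R \<ge> 0"
  shows "norm (\<Psi> p q *\<^sub>R clip R (w - v) - \<Psi> p' q' *\<^sub>R clip R (w' - v'))
    \<le> (LP * R + CP) * (norm ((p, v) - (p', v')) + norm ((q, w) - (q', w')))"
proof -
  define n1 where "n1 = norm ((p, v) - (p', v'))"
  define n2 where "n2 = norm ((q, w) - (q', w'))"
  have n: "norm (p - p') \<le> n1" "norm (v - v') \<le> n1" "norm (q - q') \<le> n2" "norm (w - w') \<le> n2"
    using norm_fst_le[of "p - p'" "v - v'"] norm_snd_le[of "v - v'" "p - p'"]
      norm_fst_le[of "q - q'" "w - w'"] norm_snd_le[of "w - w'" "q - q'"]
    by (simp_all add: n1_def n2_def)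
  have LP: "LP \<ge> 0"
    using lipschitz_on_nonneg[OF lip] .
  have "\<bar>\<Psi> p q - \<Psi> p' q'\<bar> \<le> LP * dist (p, q) (p', q')"
    using lipschitz_onD[OF lip, of "(p, q)" "(p', q')"] by (simp add: dist_real_def)
  also have "dist (p, q) (p', q') \<le> n1 + n2"
    using norm_Pair_le[of "p - p'" "q - q'"] n by (simp add: dist_norm)
  finally have \<Psi>_diff: "\<bar>\<Psi> p q - \<Psi> p' q'\<bar> \<le> LP * (n1 + n2)"
    using LP by (simp add: mult_left_mono)
  have "norm (clip R (w - v) - clip R (w' - v')) \<le> norm ((w - w') - (v - v'))"
    using dist_clip_le[OF R, of "w - v" "w' - v'"] by (simp add: dist_norm algebra_simps)
  also have "\<dots> \<le> n1 + n2"
    using norm_triangle_ineq4[of "w - w'" "v - v'"] n by simp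
  finally have clip_diff: "norm (clip R (w - v) - clip R (w' - v')) \<le> n1 + n2" .
  have "\<Psi> p q *\<^sub>R clip R (w - v) - \<Psi> p' q' *\<^sub>R clip R (w' - v')
      = (\<Psi> p q - \<Psi> p' q') *\<^sub>R clip R (w - v) + \<Psi> p' q' *\<^sub>R (clip R (w - v) - clip R (w' - v'))"
    by (simp add: algebra_simps)
  also have "norm \<dots> \<le> \<bar>\<Psi> p q - \<Psi> p' q'\<bar> * norm (clip R (w - v))
      + \<bar>\<Psi> p' q'\<bar> * norm (clip R (w - v) - clip R (w' - v'))"
    by (rule order_trans[OF norm_triangle_ineq]) simp
  also have "\<dots> \<le> LP * (n1 + n2) * R + CP * (n1 + n2)"
    using \<Psi>_diff clip_diff norm_clip_le[OF R] bnd[of p' q'] LP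
    by (intro add_mono mult_mono) auto
  finally show ?thesis
    by (simp add: n1_def n2_def algebra_simps)
qed

definition clipped_alignment ::
  "('a::real_normed_vector \<Rightarrow> 'a \<Rightarrow> real) \<Rightarrow> nat \<Rightarrow> real \<Rightarrow> nat \<Rightarrow> (nat \<Rightarrow> 'a \<times> 'a) \<Rightarrow> 'a"
where
  "clipped_alignment \<Psi> N R i X =
     (1 / real N) *\<^sub>R (\<Sum>j<N. \<Psi> (fst (X i)) (fst (X j)) *\<^sub>R clip R (snd (X j) - snd (X i)))"

definition clipped_cs_field ::
  "('a::real_normed_vector \<Rightarrow> 'a \<Rightarrow> real) \<Rightarrow> nat \<Rightarrow> real \<Rightarrow> real \<Rightarrow> 'a \<Rightarrow> nat \<Rightarrow> (nat \<Rightarrow> 'a \<times> 'a) \<Rightarrow> 'a \<times> 'a"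
where
  "clipped_cs_field \<Psi> N R k vbar i X =
     (snd (X i), clipped_alignment \<Psi> N R i X - k *\<^sub>R (snd (X i) - vbar))"

lemma clipped_alignment_Lipschitz:
  fixes \<Psi> :: "'a::euclidean_space \<Rightarrow> 'a \<Rightarrow> real" and X Y :: "nat \<Rightarrow> 'a \<times> 'a"
  assumes lip: "LP-lipschitz_on UNIV (\<lambda>z. \<Psi> (fst z) (snd z))"
    and bnd: "\<And>y z. 0 \<le> \<Psi> y z \<and> \<Psi> y z \<le> CP"
    and R: "R \<ge> 0" and N: "N \<ge> 1" and i: "i < N"
  shows "norm (clipped_alignment \<Psi> N R i X - clipped_alignment \<Psi> N R i Y)
         \<le> 2 * (LP * R + CP) * (\<Sum>j<N. norm (X j - Y j))"
proof -
  define C where "C = LP * R + CP"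
  define n where "n j = norm (X j - Y j)" for j
  define S where "S = (\<Sum>j<N. n j)"
  have C: "C \<ge> 0"
    using lipschitz_on_nonneg[OF lip] bnd[of 0 0] R by (simp add: C_def)
  have S: "n i \<le> S" "S \<ge> 0"
    using i by (auto simp: S_def n_def intro: member_le_sum sum_nonneg)
  have interaction: "norm (\<Psi> (fst (X i)) (fst (X j)) *\<^sub>R clip R (snd (X j) - snd (X i))
      - \<Psi> (fst (Y i)) (fst (Y j)) *\<^sub>R clip R (snd (Y j) - snd (Y i))) \<le> C * (n i + n j)" for j
    using norm_interaction_diff_le[OF lip bnd R, where p="fst (X i)" and q="fst (X j)" and v="snd (X i)"
        and w="snd (X j)" and p'="fst (Y i)" and q'="fst (Y j)" and v'="snd (Y i)" and w'="snd (Y j)"]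
    by (simp add: C_def n_def minus_prod_def)
  have "norm (clipped_alignment \<Psi> N R i X - clipped_alignment \<Psi> N R i Y) = (1 / real N) * norm (\<Sum>j<N.
      \<Psi> (fst (X i)) (fst (X j)) *\<^sub>R clip R (snd (X j) - snd (X i))
      - \<Psi> (fst (Y i)) (fst (Y j)) *\<^sub>R clip R (snd (Y j) - snd (Y i)))"
    by (simp add: clipped_alignment_def sum_subtractf flip: scaleR_diff_right)
  also have "\<dots> \<le> (1 / real N) * (\<Sum>j<N. C * (n i + n j))"
    using interaction by (intro mult_left_mono order_trans[OF norm_sum sum_mono]) auto
  also have "\<dots> = C * n i + C * S / real N"
    using N by (simp add: S_def sum.distrib field_simps flip: sum_distrib_left)
  also have "\<dots> \<le> C * S + C * S"
  proof (rule add_mono)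
    show "C * n i \<le> C * S"
      using C S by (simp add: mult_left_mono)
    have "0 \<le> C * S" "real N \<ge> 1"
      using C S N by auto
    then show "C * S / real N \<le> C * S"
      by (simp add: divide_le_eq mult_le_cancel_left1)
  qed
  finally show ?thesis
    by (simp add: C_def S_def n_def algebra_simps)
qed

lemma clipped_cs_field_Lipschitz:
  fixes \<Psi> :: "'a::euclidean_space \<Rightarrow> 'a \<Rightarrow> real" and X Y :: "nat \<Rightarrow> 'a \<times> 'a"
  assumes lip: "LP-lipschitz_on UNIV (\<lambda>z. \<Psi> (fst z) (snd z))"
    and bnd: "\<And>y z. 0 \<le> \<Psi> y z \<and> \<Psi> y z \<le> CP"
    and R: "R \<ge> 0" and k: "k \<ge> 0" and N: "N \<ge> 1" and i: "i < N"
  shows "norm (clipped_cs_field \<Psi> N R k vbar i X - clipped_cs_field \<Psi> N R k vbar i Y)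
         \<le> (1 + k + 2 * (LP * R + CP)) * (\<Sum>j<N. norm (X j - Y j))"
proof -
  define S where "S = (\<Sum>j<N. norm (X j - Y j))"
  define A where "A = clipped_alignment \<Psi> N R i X - clipped_alignment \<Psi> N R i Y"
  have snd_diff: "norm (snd (X i) - snd (Y i)) \<le> S"
    using norm_snd_le[of "snd (X i - Y i)" "fst (X i - Y i)"] member_le_sum[of i "{..<N}" "\<lambda>j. norm (X j - Y j)"] i
    by (simp add: S_def minus_prod_def)
  have A: "norm A \<le> 2 * (LP * R + CP) * S"
    unfolding A_def S_def by (rule clipped_alignment_Lipschitz[OF lip bnd R N i])
  have "norm (clipped_cs_field \<Psi> N R k vbar i X - clipped_cs_field \<Psi> N R k vbar i Y)
      \<le> norm (snd (X i) - snd (Y i)) + norm (A - k *\<^sub>R (snd (X i) - snd (Y i)))"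
    using norm_Pair_le by (simp add: clipped_cs_field_def A_def algebra_simps)
  also have "\<dots> \<le> S + (2 * (LP * R + CP) * S + k * S)"
  proof (rule add_mono)
    have "norm (k *\<^sub>R (snd (X i) - snd (Y i))) \<le> k * S"
      using snd_diff k by (simp add: mult_left_mono)
    then show "norm (A - k *\<^sub>R (snd (X i) - snd (Y i))) \<le> 2 * (LP * R + CP) * S + k * S"
      using A norm_triangle_ineq4[of A "k *\<^sub>R (snd (X i) - snd (Y i))"] by linarith
  qed (rule snd_diff)
  finally show ?thesis
    by (simp add: S_def algebra_simps)
qed

text \<open>Symmetry of the weights makes the alignment term dissipative for the energy
  \<open>\<Sum>\<^sub>i |w\<^sub>i - vbar|\<^sup>2\<close>: swapping \<open>i\<close> and \<open>j\<close> shows that twice the sum equals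
  \<open>- \<Sum>\<^sub>i\<^sub>j c\<^sub>i\<^sub>j (w\<^sub>j - w\<^sub>i) \<bullet> clip (w\<^sub>j - w\<^sub>i)\<close>.\<close>

lemma alignment_dissipative:
  fixes w :: "nat \<Rightarrow> 'a::real_inner" and c :: "nat \<Rightarrow> nat \<Rightarrow> real"
  assumes sym: "\<And>i j. c i j = c j i" and nonneg: "\<And>i j. c i j \<ge> 0" and R: "R \<ge> 0"
  shows "(\<Sum>i<N. inner (w i - vbar) (\<Sum>j<N. c i j *\<^sub>R clip R (w j - w i))) \<le> 0"
proof -
  define S where "S = (\<Sum>i<N. \<Sum>j<N. c i j * inner (w i - vbar) (clip R (w j - w i)))"
  have "S = (\<Sum>j<N. \<Sum>i<N. c i j * inner (w i - vbar) (clip R (w j - w i)))"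
    unfolding S_def by (rule sum.swap)
  also have "\<dots> = (\<Sum>i<N. \<Sum>j<N. - (c i j * inner (w j - vbar) (clip R (w j - w i))))"
  proof (intro sum.cong refl)
    fix i j
    have "clip R (w i - w j) = - clip R (w j - w i)"
      using clip_minus[of R "w j - w i"] by simp
    then show "c j i * inner (w j - vbar) (clip R (w i - w j))
        = - (c i j * inner (w j - vbar) (clip R (w j - w i)))"
      by (simp add: sym[of j i])
  qed
  finally have "2 * S = (\<Sum>i<N. \<Sum>j<N. c i j * inner (w i - vbar) (clip R (w j - w i)))
      - (\<Sum>i<N. \<Sum>j<N. c i j * inner (w j - vbar) (clip R (w j - w i)))"
    by (simp add: S_def sum_negf)
  also have "\<dots> = (\<Sum>i<N. \<Sum>j<N. - (c i j * inner (w j - w i) (clip R (w j - w i))))"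
    by (simp add: sum_subtractf[symmetric] inner_diff_left algebra_simps)
  also have "\<dots> \<le> 0"
    by (intro sum_nonpos) (simp add: mult_nonneg_nonneg[OF nonneg inner_clip_nonneg[OF R]])
  finally show ?thesis
    by (simp add: S_def inner_sum_right)
qed

section \<open>Energy dissipation under linear feedback\<close>

lemma sqnormN_nonneg: "sqnormN N w \<ge> 0"
  by (simp add: sqnormN_def sum_nonneg)

lemma norm_le_sqrt_of_sqnormN_le:
  assumes "sqnormN N w \<le> E" and "i < N"
  shows "norm (w i) \<le> sqrt (real N * E)"
proof -
  have "(norm (w i))\<^sup>2 \<le> (\<Sum>j<N. (norm (w j))\<^sup>2)"
    using assms(2) by (intro member_le_sum) auto
  also have "\<dots> = real N * sqnormN N w"
    using assms(2) by (simp add: sqnormN_def)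
  also have "\<dots> \<le> real N * E"
    using assms(1) by (simp add: mult_left_mono)
  finally show ?thesis
    by (simp add: real_le_rsqrt)
qed

lemma has_real_derivative_power2_norm:
  fixes f :: "real \<Rightarrow> 'a::real_inner"
  assumes "(f has_vector_derivative f') (at t within S)"
  shows "((\<lambda>t. (norm (f t))\<^sup>2) has_real_derivative 2 * inner (f t) f') (at t within S)"
proof -
  have d: "(f has_derivative (\<lambda>h. h *\<^sub>R f')) (at t within S)"
    using assms by (simp add: has_vector_derivative_def)
  show ?thesis
    unfolding has_field_derivative_def power2_norm_eq_inner
    by (rule has_derivative_eq_rhs[OF has_derivative_inner[OF d d]])
      (auto simp: fun_eq_iff inner_commute algebra_simps)
qed

text \<open>Integrating \<open>c E \<le> - E'\<close> gives \<open>c \<integral>\<^sub>a\<^sup>T E \<le> E a - E T \<le> E a\<close>.\<close>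

lemma dissipation_bounds:
  fixes E E' :: "real \<Rightarrow> real"
  assumes aT: "a \<le> T" and c: "c > 0"
    and deriv: "\<And>t. t \<in> {a..T} \<Longrightarrow> (E has_real_derivative E' t) (at t within {a..T})"
    and decay: "\<And>t. t \<in> {a..T} \<Longrightarrow> E' t \<le> - c * E t"
    and nonneg: "\<And>t. t \<in> {a..T} \<Longrightarrow> E t \<ge> 0"
  shows "\<And>t. t \<in> {a..T} \<Longrightarrow> E t \<le> E a"
    and "integral {a..T} E \<le> E a / c"
proof -
  have ftc: "(E' has_integral (E t - E a)) {a..t}" if "t \<in> {a..T}" for t
    using that by (intro fundamental_theorem_of_calculus)
      (auto simp flip: has_real_derivative_iff_has_vector_derivative
        intro: DERIV_subset[OF deriv])
  show "E t \<le> E a" if "t \<in> {a..T}" for t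
  proof -
    have "E' s \<le> 0" if "s \<in> {a..T}" for s
      using decay[OF that] mult_nonneg_nonneg[of c "E s"] nonneg[OF that] c by linarith
    then have "E t - E a \<le> 0"
      using \<open>t \<in> {a..T}\<close> by (intro has_integral_le[OF ftc[OF \<open>t \<in> {a..T}\<close>] has_integral_0]) auto
    then show ?thesis
      by simp
  qed
  have "continuous_on {a..T} E"
    unfolding continuous_on_eq_continuous_within using deriv by (blast intro: DERIV_continuous)
  then have "((\<lambda>t. c * E t) has_integral c * integral {a..T} E) {a..T}"
    by (intro has_integral_mult_right integrable_integral integrable_continuous_interval)
  from has_integral_le[OF this has_integral_neg[OF ftc]] aT decay
  have "c * integral {a..T} E \<le> E a - E T"
    by fastforce
  then show "integral {a..T} E \<le> E a / c"
    using nonneg[of T] aT c by (simp add: field_simps)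
qed

lemma has_real_derivative_sqnormN:
  fixes w :: "nat \<Rightarrow> real \<Rightarrow> 'a::real_inner"
  assumes "\<And>i. i < N \<Longrightarrow> (w i has_vector_derivative w' i) (at t within S)"
  shows "((\<lambda>t. sqnormN N (\<lambda>i. w i t - c)) has_real_derivative
    (\<Sum>i<N. 2 * inner (w i t - c) (w' i)) / real N) (at t within S)"
proof -
  have d: "((\<lambda>t. w i t - c) has_vector_derivative w' i) (at t within S)" if "i < N" for i
    using has_vector_derivative_diff[OF assms[OF that] has_vector_derivative_const] by simp
  have "((\<lambda>t. \<Sum>i<N. (norm (w i t - c))\<^sup>2) has_real_derivative (\<Sum>i<N. 2 * inner (w i t - c) (w' i)))
      (at t within S)"
    by (intro DERIV_sum has_real_derivative_power2_norm) (auto intro: d)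
  then show ?thesis
    unfolding sqnormN_def by (rule DERIV_cdivide)
qed

lemma feedback_energy_derivative_le:
  fixes d A :: "nat \<Rightarrow> 'a::real_inner"
  assumes "(\<Sum>i<N. inner (d i) (A i)) \<le> 0"
  shows "(\<Sum>i<N. 2 * inner (d i) ((1 / real N) *\<^sub>R A i - k *\<^sub>R d i)) / real N \<le> - (2 * k) * sqnormN N d"
proof -
  have expand: "2 * inner u ((1 / real N) *\<^sub>R X - k *\<^sub>R u) = 2 / real N * inner u X - 2 * k * (norm u)\<^sup>2"
    for u X :: 'a
    by (simp add: inner_diff_right power2_norm_eq_inner)
  have "2 / real N * (\<Sum>i<N. inner (d i) (A i)) \<le> 0"
    using assms by (rule mult_nonneg_nonpos[rotated]) simp
  moreover have "(\<Sum>i<N. 2 * inner (d i) ((1 / real N) *\<^sub>R A i - k *\<^sub>R d i))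
      = 2 / real N * (\<Sum>i<N. inner (d i) (A i)) - 2 * k * (\<Sum>i<N. (norm (d i))\<^sup>2)"
    by (simp only: expand sum_subtractf sum_distrib_left)
  ultimately have "(\<Sum>i<N. 2 * inner (d i) ((1 / real N) *\<^sub>R A i - k *\<^sub>R d i))
      \<le> - (2 * k) * (\<Sum>i<N. (norm (d i))\<^sup>2)"
    by linarith
  then have "(\<Sum>i<N. 2 * inner (d i) ((1 / real N) *\<^sub>R A i - k *\<^sub>R d i)) / real N
      \<le> - (2 * k) * (\<Sum>i<N. (norm (d i))\<^sup>2) / real N"
    by (rule divide_right_mono) simp
  then show ?thesis
    by (simp only: sqnormN_def times_divide_eq_right)
qed

lemma clipped_alignment_energy_bounds:
  fixes w :: "nat \<Rightarrow> real \<Rightarrow> 'a::real_inner" and c :: "real \<Rightarrow> nat \<Rightarrow> nat \<Rightarrow> real"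
  assumes sym: "\<And>t i j. c t i j = c t j i" and nonneg: "\<And>t i j. c t i j \<ge> 0"
    and R: "R \<ge> 0" and k: "k > 0" and aT: "a \<le> T"
    and deriv: "\<And>i t. i < N \<Longrightarrow> t \<in> {a..T} \<Longrightarrow> (w i has_vector_derivative
      (1 / real N) *\<^sub>R (\<Sum>j<N. c t i j *\<^sub>R clip R (w j t - w i t)) - k *\<^sub>R (w i t - vbar))
      (at t within {a..T})"
  shows "\<And>t. t \<in> {a..T} \<Longrightarrow> sqnormN N (\<lambda>i. w i t - vbar) \<le> sqnormN N (\<lambda>i. w i a - vbar)"
    and "integral {a..T} (\<lambda>t. sqnormN N (\<lambda>i. w i t - vbar))
      \<le> sqnormN N (\<lambda>i. w i a - vbar) / (2 * k)"
proof -
  define E where "E t = sqnormN N (\<lambda>i. w i t - vbar)" for t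
  define A where "A t i = (\<Sum>j<N. c t i j *\<^sub>R clip R (w j t - w i t))" for t i
  define E' where "E' t = (\<Sum>i<N. 2 * inner (w i t - vbar) ((1 / real N) *\<^sub>R A t i
    - k *\<^sub>R (w i t - vbar))) / real N" for t
  have E_deriv: "(E has_real_derivative E' t) (at t within {a..T})" if "t \<in> {a..T}" for t
    unfolding E_def E'_def A_def by (rule has_real_derivative_sqnormN) (use deriv that in blast)
  have E_decay: "E' t \<le> - (2 * k) * E t" if "t \<in> {a..T}" for t
    unfolding E_def E'_def
    by (rule feedback_energy_derivative_le) (unfold A_def, rule alignment_dissipative[OF sym nonneg R])
  have E_nonneg: "E t \<ge> 0" if "t \<in> {a..T}" for t
    by (simp add: E_def sqnormN_nonneg)
  have rate: "2 * k > 0"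
    using k by simp
  have "E t \<le> E a" if "t \<in> {a..T}" for t
    using aT rate E_deriv E_decay E_nonneg that by (rule dissipation_bounds(1))
  then show "sqnormN N (\<lambda>i. w i t - vbar) \<le> sqnormN N (\<lambda>i. w i a - vbar)" if "t \<in> {a..T}" for t
    using that by (simp add: E_def)
  have "integral {a..T} E \<le> E a / (2 * k)"
    using aT rate E_deriv E_decay E_nonneg by (rule dissipation_bounds(2))
  then show "integral {a..T} (\<lambda>t. sqnormN N (\<lambda>i. w i t - vbar)) \<le> sqnormN N (\<lambda>i. w i a - vbar) / (2 * k)"
    by (simp add: E_def[abs_def])
qed

section \<open>Trajectories of the feedback system\<close>

lemma sqnormN_cong: "(\<And>i. i < N \<Longrightarrow> w i = w' i) \<Longrightarrow> sqnormN N w = sqnormN N w'"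
  by (simp add: sqnormN_def)

lemma continuous_on_alignment:
  fixes \<Psi> :: "'a::real_normed_vector \<Rightarrow> 'a \<Rightarrow> real" and x v :: "nat \<Rightarrow> 'b::topological_space \<Rightarrow> 'a"
  assumes \<Psi>: "continuous_on UNIV (\<lambda>z. \<Psi> (fst z) (snd z))"
    and x: "\<And>j. j < N \<Longrightarrow> continuous_on S (x j)" and v: "\<And>j. j < N \<Longrightarrow> continuous_on S (v j)"
    and i: "i < N"
  shows "continuous_on S (\<lambda>t. (1 / real N) *\<^sub>R (\<Sum>j<N. \<Psi> (x i t) (x j t) *\<^sub>R (v j t - v i t)))"
proof -
  have \<Psi>_cont: "continuous_on S (\<lambda>t. \<Psi> (x i t) (x j t))" if "j < N" for j
    using continuous_on_compose2[OF \<Psi> continuous_on_Pair[OF x[OF i] x[OF that]]] by simp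
  have term_cont: "continuous_on S (\<lambda>t. \<Psi> (x i t) (x j t) *\<^sub>R (v j t - v i t))" if "j < N" for j
    by (intro continuous_on_scaleR continuous_on_diff \<Psi>_cont[OF that] v[OF that] v[OF i])
  show ?thesis
    by (rule continuous_on_scaleR[OF continuous_on_const continuous_on_sum]) (auto intro: term_cont)
qed

lemma is_trajectory_continuous:
  assumes tr: "is_trajectory \<Psi> N f a T x0 v0 x v" and i: "i < N"
  shows "continuous_on {a..T} (x i)" and "continuous_on {a..T} (v i)"
proof -
  have indefinite: "continuous_on {a..T} F"
    if "g integrable_on {a..T}" "\<And>t. t \<in> {a..T} \<Longrightarrow> (g has_integral (F t - F a)) {a..t}"
    for F g :: "real \<Rightarrow> 'a"
  proof -
    have "continuous_on {a..T} (\<lambda>t. F a + integral {a..t} g)"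
      by (intro continuous_intros indefinite_integral_continuous_1 that)
    then show ?thesis
      by (rule continuous_on_eq) (simp add: integral_unique[OF that(2)])
  qed
  have "v i integrable_on {a..T}" "cs_rhs \<Psi> N f x v i integrable_on {a..T}"
    and "\<And>t. t \<in> {a..T} \<Longrightarrow> (v i has_integral (x i t - x i a)) {a..t}"
    and "\<And>t. t \<in> {a..T} \<Longrightarrow> (cs_rhs \<Psi> N f x v i has_integral (v i t - v i a)) {a..t}"
    using tr i unfolding is_trajectory_def absolutely_integrable_on_def by blast+
  then show "continuous_on {a..T} (x i)" "continuous_on {a..T} (v i)"
    by (auto intro: indefinite)
qed

lemma is_trajectoryI:
  assumes init: "\<And>i. i < N \<Longrightarrow> x i a = x0 i \<and> v i a = v0 i"
    and dx: "\<And>i t. i < N \<Longrightarrow> t \<in> {a..T} \<Longrightarrow> (x i has_vector_derivative v i t) (at t within {a..T})"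
    and dv: "\<And>i t. i < N \<Longrightarrow> t \<in> {a..T} \<Longrightarrow>
      (v i has_vector_derivative cs_rhs \<Psi> N f x v i t) (at t within {a..T})"
    and cont: "\<And>i. i < N \<Longrightarrow> continuous_on {a..T} (cs_rhs \<Psi> N f x v i)"
  shows "is_trajectory \<Psi> N f a T x0 v0 x v"
proof -
  have ftc: "(g' has_integral (g t - g a)) {a..t}"
    if "\<And>s. s \<in> {a..T} \<Longrightarrow> (g has_vector_derivative g' s) (at s within {a..T})" "t \<in> {a..T}"
    for g g' :: "real \<Rightarrow> 'a" and t
  proof (rule fundamental_theorem_of_calculus)
    show "a \<le> t"
      using that(2) by simp
    show "(g has_vector_derivative g' s) (at s within {a..t})" if "s \<in> {a..t}" for s
      using has_vector_derivative_within_subset[OF \<open>\<And>s. s \<in> {a..T} \<Longrightarrow> _\<close>[of s]]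
        that \<open>t \<in> {a..T}\<close> by auto
  qed
  have "continuous_on {a..T} (v i)" if "i < N" for i
    using dv[OF that] by (rule continuous_on_vector_derivative)
  moreover have "(v i has_integral (x i t - x i a)) {a..t}" if "i < N" "t \<in> {a..T}" for i t
    using that by (intro ftc[of "x i" "v i"]) (auto intro: dx)
  moreover have "(cs_rhs \<Psi> N f x v i has_integral (v i t - v i a)) {a..t}" if "i < N" "t \<in> {a..T}" for i t
    using that by (intro ftc[of "v i" "cs_rhs \<Psi> N f x v i"]) (auto intro: dv)
  ultimately show ?thesis
    unfolding is_trajectory_def
    using init cont by (auto intro: absolutely_integrable_continuous_real)
qed

lemma clipped_cs_solution_exists:
  fixes \<Psi> :: "'a::euclidean_space \<Rightarrow> 'a \<Rightarrow> real" and xa va :: "nat \<Rightarrow> 'a"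
  assumes lip: "LP-lipschitz_on UNIV (\<lambda>z. \<Psi> (fst z) (snd z))"
    and bnd: "\<And>y z. 0 \<le> \<Psi> y z \<and> \<Psi> y z \<le> CP"
    and R: "R \<ge> 0" and k: "k \<ge> 0" and N: "N \<ge> 1" and aT: "a \<le> T"
  obtains y w where "\<And>i. i < N \<Longrightarrow> y i a = xa i \<and> w i a = va i"
    and "\<And>i t. i < N \<Longrightarrow> t \<in> {a..T} \<Longrightarrow> (y i has_vector_derivative w i t) (at t within {a..T})"
    and "\<And>i t. i < N \<Longrightarrow> t \<in> {a..T} \<Longrightarrow> (w i has_vector_derivative (1 / real N) *\<^sub>R
      (\<Sum>j<N. \<Psi> (y i t) (y j t) *\<^sub>R clip R (w j t - w i t)) - k *\<^sub>R (w i t - vbar)) (at t within {a..T})"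
proof -
  define F where "F = clipped_cs_field \<Psi> N R k vbar"
  define L where "L = 1 + k + 2 * (LP * R + CP)"
  have L: "L \<ge> 0"
    using lipschitz_on_nonneg[OF lip] bnd[of vbar vbar] R k by (simp add: L_def)
  have F_lip: "norm (F i X - F i Y) \<le> L * (\<Sum>j<N. norm (X j - Y j))" if "i < N" for i X Y
    unfolding F_def L_def by (rule clipped_cs_field_Lipschitz[OF lip bnd R k N that])
  obtain u where u: "\<And>i. i < N \<Longrightarrow> continuous_on {a..T} (u i)"
    and u_eq: "\<And>i t. i < N \<Longrightarrow> t \<in> {a..T} \<Longrightarrow>
      u i t = (xa i, va i) + integral {a..t} (\<lambda>s. F i (\<lambda>j. u j s))"
    using Lipschitz_integral_equation_solvable[where G=F and u_init="\<lambda>i. (xa i, va i)", OF aT L F_lip]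
    by blast
  have u_a: "u i a = (xa i, va i)" if "i < N" for i
    using u_eq[OF that, of a] aT by simp
  have du: "(u i has_vector_derivative F i (\<lambda>j. u j t)) (at t within {a..T})"
    if i: "i < N" and t: "t \<in> {a..T}" for i t
  proof (rule has_vector_derivative_transform[OF t])
    show "u i s = (xa i, va i) + integral {a..s} (\<lambda>s. F i (\<lambda>j. u j s))" if "s \<in> {a..T}" for s
      using u_eq[OF i that] .
    have "continuous_on {a..T} (\<lambda>s. F i (\<lambda>j. u j s))"
      by (rule continuous_on_compose_sum_Lipschitz[where G="F i" and f=u, OF F_lip[OF i] u])
    then show "((\<lambda>t. (xa i, va i) + integral {a..t} (\<lambda>s. F i (\<lambda>j. u j s)))
        has_vector_derivative F i (\<lambda>j. u j t)) (at t within {a..T})"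
      using integral_has_vector_derivative[OF _ t] by (auto intro!: derivative_eq_intros)
  qed
  show thesis
  proof (rule that[of "\<lambda>i t. fst (u i t)" "\<lambda>i t. snd (u i t)"])
    fix i t assume i: "i < N"
    show "fst (u i a) = xa i \<and> snd (u i a) = va i"
      using u_a[OF i] by simp
    assume t: "t \<in> {a..T}"
    show "((\<lambda>t. fst (u i t)) has_vector_derivative snd (u i t)) (at t within {a..T})"
      using bounded_linear.has_vector_derivative[OF bounded_linear_fst du[OF i t]]
      by (simp add: F_def clipped_cs_field_def clipped_alignment_def)
    show "((\<lambda>t. snd (u i t)) has_vector_derivative (1 / real N) *\<^sub>R (\<Sum>j<N. \<Psi> (fst (u i t)) (fst (u j t))
        *\<^sub>R clip R (snd (u j t) - snd (u i t))) - k *\<^sub>R (snd (u i t) - vbar)) (at t within {a..T})"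
      using bounded_linear.has_vector_derivative[OF bounded_linear_snd du[OF i t]]
      by (simp add: F_def clipped_cs_field_def clipped_alignment_def)
  qed
qed

definition linear_feedback :: "real \<Rightarrow> 'a \<Rightarrow> real \<Rightarrow> 'a \<times> 'a \<Rightarrow> 'a::real_normed_vector" where
  "linear_feedback k vbar t z = - k *\<^sub>R (snd z - vbar)"

text \<open>Under the feedback the energy is nonincreasing, so velocity differences never exceed
  \<open>R = 2 (N E\<^sub>0)\<^sup>1\<^sup>/\<^sup>2\<close> and the solution of the system clipped at \<open>R\<close> solves the original one.\<close>

lemma linear_feedback_trajectory:
  fixes \<Psi> :: "'a::euclidean_space \<Rightarrow> 'a \<Rightarrow> real" and xa va :: "nat \<Rightarrow> 'a"
  assumes lip: "LP-lipschitz_on UNIV (\<lambda>z. \<Psi> (fst z) (snd z))"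
    and sym: "\<And>y z. \<Psi> y z = \<Psi> z y" and bnd: "\<And>y z. 0 \<le> \<Psi> y z \<and> \<Psi> y z \<le> CP"
    and k: "k > 0" and N: "N \<ge> 1" and aT: "a \<le> T"
  shows "\<exists>y w. is_trajectory \<Psi> N (linear_feedback k vbar) a T xa va y w \<and>
    integral {a..T} (\<lambda>t. sqnormN N (\<lambda>i. w i t - vbar)) \<le> sqnormN N (\<lambda>i. va i - vbar) / (2 * k)"
proof -
  define E\<^sub>0 where "E\<^sub>0 = sqnormN N (\<lambda>i. va i - vbar)"
  define R where "R = 2 * sqrt (real N * E\<^sub>0)"
  have R: "R \<ge> 0"
    using sqnormN_nonneg[of N "\<lambda>i. va i - vbar"] by (simp add: R_def E\<^sub>0_def)
  obtain y w where init: "\<And>i. i < N \<Longrightarrow> y i a = xa i \<and> w i a = va i"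
    and dy: "\<And>i t. i < N \<Longrightarrow> t \<in> {a..T} \<Longrightarrow> (y i has_vector_derivative w i t) (at t within {a..T})"
    and dw: "\<And>i t. i < N \<Longrightarrow> t \<in> {a..T} \<Longrightarrow> (w i has_vector_derivative (1 / real N) *\<^sub>R
      (\<Sum>j<N. \<Psi> (y i t) (y j t) *\<^sub>R clip R (w j t - w i t)) - k *\<^sub>R (w i t - vbar)) (at t within {a..T})"
    using clipped_cs_solution_exists[OF lip bnd R less_imp_le[OF k] N aT, of xa va vbar] by blast
  have E\<^sub>0: "sqnormN N (\<lambda>i. w i a - vbar) = E\<^sub>0"
    unfolding E\<^sub>0_def using init by (intro sqnormN_cong) auto
  have weights: "\<And>t i j. \<Psi> (y i t) (y j t) = \<Psi> (y j t) (y i t)" "\<And>t i j. 0 \<le> \<Psi> (y i t) (y j t)"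
    using sym bnd by auto
  have energy_le: "sqnormN N (\<lambda>i. w i t - vbar) \<le> E\<^sub>0" if "t \<in> {a..T}" for t
    using weights R k aT dw that unfolding E\<^sub>0[symmetric] by (rule clipped_alignment_energy_bounds(1))
  have energy_int: "integral {a..T} (\<lambda>t. sqnormN N (\<lambda>i. w i t - vbar)) \<le> E\<^sub>0 / (2 * k)"
    using weights R k aT dw unfolding E\<^sub>0[symmetric] by (rule clipped_alignment_energy_bounds(2))
  have "clip R (w j t - w i t) = w j t - w i t" if "i < N" "j < N" "t \<in> {a..T}" for i j t
  proof (rule clip_eq_self)
    have "norm (w j t - w i t) \<le> norm (w j t - vbar) + norm (w i t - vbar)"
      using norm_triangle_ineq4[of "w j t - vbar" "w i t - vbar"] by simp
    also have "\<dots> \<le> R"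
      using norm_le_sqrt_of_sqnormN_le[OF energy_le[OF that(3)] that(1)]
        norm_le_sqrt_of_sqnormN_le[OF energy_le[OF that(3)] that(2)]
      by (simp add: R_def)
    finally show "norm (w j t - w i t) \<le> R" .
  qed
  then have dv: "(w i has_vector_derivative cs_rhs \<Psi> N (linear_feedback k vbar) y w i t)
      (at t within {a..T})" if "i < N" "t \<in> {a..T}" for i t
    using dw[OF that] that by (simp add: cs_rhs_def linear_feedback_def)
  have "continuous_on {a..T} (cs_rhs \<Psi> N (linear_feedback k vbar) y w i)" if "i < N" for i
    unfolding cs_rhs_def linear_feedback_def
    using continuous_on_vector_derivative[OF dy] continuous_on_vector_derivative[OF dv] that
      lipschitz_on_continuous_on[OF lip]
    by (intro continuous_intros continuous_on_alignment) auto
  with init dy dv have "is_trajectory \<Psi> N (linear_feedback k vbar) a T xa va y w"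
    by (rule is_trajectoryI)
  with energy_int show ?thesis
    unfolding E\<^sub>0_def by blast
qed

lemma linear_feedback_cost_bound:
  fixes \<Psi> :: "'a::euclidean_space \<Rightarrow> 'a \<Rightarrow> real" and xa va :: "nat \<Rightarrow> 'a"
  assumes lip: "LP-lipschitz_on UNIV (\<lambda>z. \<Psi> (fst z) (snd z))"
    and sym: "\<And>y z. \<Psi> y z = \<Psi> z y" and bnd: "\<And>y z. 0 \<le> \<Psi> y z \<and> \<Psi> y z \<le> CP"
    and lam: "lam > 0" and N: "N \<ge> 1" and aT: "a \<le> T"
  shows "\<exists>y w. is_trajectory \<Psi> N (linear_feedback (1 / sqrt lam) vbar) a T xa va y w \<and>
    cost lam vbar N (linear_feedback (1 / sqrt lam) vbar) y w a T \<le> sqrt lam * sqnormN N (\<lambda>i. va i - vbar)"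
proof -
  define k where "k = 1 / sqrt lam"
  have k: "k > 0" "lam * k\<^sup>2 = 1"
    using lam by (auto simp: k_def power_divide)
  obtain y w where tr: "is_trajectory \<Psi> N (linear_feedback k vbar) a T xa va y w"
    and energy: "integral {a..T} (\<lambda>t. sqnormN N (\<lambda>i. w i t - vbar)) \<le> sqnormN N (\<lambda>i. va i - vbar) / (2 * k)"
    using linear_feedback_trajectory[OF lip sym bnd k(1) N aT] by blast
  \<comment> \<open>Since \<open>\<lambda> k\<^sup>2 = 1\<close>, the running cost of the feedback is twice the energy.\<close>
  have "sqnormN N (\<lambda>i. linear_feedback k vbar t (y i t, w i t)) = k\<^sup>2 * sqnormN N (\<lambda>i. w i t - vbar)" for t
    using k by (simp add: sqnormN_def linear_feedback_def sum_distrib_left power_mult_distrib)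
  then have "cost lam vbar N (linear_feedback k vbar) y w a T = 2 * integral {a..T} (\<lambda>t. sqnormN N (\<lambda>i. w i t - vbar))"
    using k by (simp add: cost_def mult.assoc[symmetric])
  also have "\<dots> \<le> sqrt lam * sqnormN N (\<lambda>i. va i - vbar)"
    using energy k by (simp add: k_def field_simps)
  finally show ?thesis
    using tr by (auto simp: k_def)
qed

section \<open>Admissible controls and costs\<close>

lemma admissible_growth_bound:
  assumes "admissible CB a T f"
  shows "AE t in lebesgue_on {a..T}. 0 \<le> CB \<and> (\<forall>z. norm (f t z) \<le> CB + CB * norm z)"
  using assms unfolding admissible_def
proof (elim conjE eventually_mono)
  fix t assume "\<exists>L. norm (f t 0) + L \<le> CB \<and> L-lipschitz_on UNIV (f t)"
  then obtain L where L: "norm (f t 0) + L \<le> CB" "L-lipschitz_on UNIV (f t)"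
    by blast
  have "L \<ge> 0"
    using lipschitz_on_nonneg[OF L(2)] .
  then have "L \<le> CB" "0 \<le> CB"
    using L(1) norm_ge_zero[of "f t 0"] by linarith+
  moreover have "norm (f t z) \<le> CB + CB * norm z" for z
  proof -
    have "norm (f t z) \<le> norm (f t 0) + norm (f t z - f t 0)"
      by (rule norm_triangle_sub)
    also have "norm (f t z - f t 0) \<le> L * norm (z - 0)"
      by (rule lipschitz_on_normD[OF L(2)]) auto
    also have "L * norm (z - 0) \<le> CB * norm z"
      using \<open>L \<le> CB\<close> by (simp add: mult_right_mono)
    finally show ?thesis
      using L(1) \<open>L \<ge> 0\<close> by simp
  qed
  ultimately show "0 \<le> CB \<and> (\<forall>z. norm (f t z) \<le> CB + CB * norm z)"
    by blast
qed

lemma admissible_concat: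
  assumes f: "admissible CB a T f" and g: "admissible CB a T g"
  shows "admissible CB a T (\<lambda>t. if t < c then f t else g t)"
proof -
  have measurable: "(\<lambda>t. (if t < c then f t else g t) z) \<in> borel_measurable (lebesgue_on {a..T})" for z
  proof -
    have "(\<lambda>t. f t z) \<in> borel_measurable (lebesgue_on {a..T})"
      and "(\<lambda>t. g t z) \<in> borel_measurable (lebesgue_on {a..T})"
      using f g unfolding admissible_def by blast+
    moreover have "{t \<in> space (lebesgue_on {a..T}). t < c} \<in> sets (lebesgue_on {a..T})"
      by (intro borel_measurable_less continuous_imp_measurable_on_sets_lebesgue)
        (auto intro: continuous_intros)
    ultimately have "(\<lambda>t. if t < c then f t z else g t z) \<in> borel_measurable (lebesgue_on {a..T})"
      by (intro measurable_If)
    moreover have "(\<lambda>t. (if t < c then f t else g t) z) = (\<lambda>t. if t < c then f t z else g t z)"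
      by (rule ext) simp
    ultimately show ?thesis
      by simp
  qed
  have "AE t in lebesgue_on {a..T}. (\<exists>L. norm (f t 0) + L \<le> CB \<and> L-lipschitz_on UNIV (f t))
      \<and> (\<exists>L. norm (g t 0) + L \<le> CB \<and> L-lipschitz_on UNIV (g t))"
    using f g unfolding admissible_def by (intro eventually_conj) auto
  then have "AE t in lebesgue_on {a..T}. \<exists>L. norm ((if t < c then f t else g t) 0) + L \<le> CB
      \<and> L-lipschitz_on UNIV (if t < c then f t else g t)"
    by (rule eventually_mono) simp
  with measurable show ?thesis
    unfolding admissible_def by blast
qed

lemma admissible_linear_feedback:
  fixes vbar :: "'a::euclidean_space"
  assumes k: "k \<ge> 0" and CB: "k * (1 + norm vbar) \<le> CB"
  shows "admissible CB a T (linear_feedback k vbar)"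
  unfolding admissible_def
proof (intro conjI allI always_eventually exI[of _ k])
  fix t :: real
  show "norm (linear_feedback k vbar t 0) + k \<le> CB"
    using k CB by (simp add: linear_feedback_def algebra_simps)
  show "k-lipschitz_on UNIV (linear_feedback k vbar t)"
  proof (rule lipschitz_onI)
    fix z1 z2 :: "'a \<times> 'a"
    have "dist (linear_feedback k vbar t z1) (linear_feedback k vbar t z2) = k * dist (snd z1) (snd z2)"
      using k by (simp add: linear_feedback_def dist_norm norm_minus_commute flip: scaleR_diff_right)
    also have "\<dots> \<le> k * dist z1 z2"
      by (rule mult_left_mono[OF dist_snd_le k])
    finally show "dist (linear_feedback k vbar t z1) (linear_feedback k vbar t z2) \<le> k * dist z1 z2" .
  qed (use k in simp)
qed (simp add: linear_feedback_def)

lemma is_trajectory_bounded: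
  assumes "is_trajectory \<Psi> N f a T x0 v0 x v"
  obtains M where "\<And>i t. i < N \<Longrightarrow> t \<in> {a..T} \<Longrightarrow> norm (x i t, v i t) \<le> M"
proof -
  have "continuous_on {a..T} (\<lambda>t. \<Sum>i<N. norm (x i t, v i t))"
    by (intro continuous_on_sum continuous_on_norm continuous_on_Pair)
      (auto intro: is_trajectory_continuous[OF assms])
  then have "compact ((\<lambda>t. \<Sum>i<N. norm (x i t, v i t)) ` {a..T})"
    by (rule compact_continuous_image[OF _ compact_Icc])
  then have "bounded ((\<lambda>t. \<Sum>i<N. norm (x i t, v i t)) ` {a..T})"
    by (rule compact_imp_bounded)
  then obtain M where M: "\<forall>s \<in> (\<lambda>t. \<Sum>i<N. norm (x i t, v i t)) ` {a..T}. norm s \<le> M"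
    unfolding bounded_iff by blast
  have "norm (x i t, v i t) \<le> M" if "i < N" "t \<in> {a..T}" for i t
  proof -
    have "norm (x i t, v i t) \<le> (\<Sum>i<N. norm (x i t, v i t))"
      using that(1) by (intro member_le_sum) auto
    also have "\<dots> \<le> M"
      using bspec[OF M imageI[OF that(2)]] by simp
    finally show ?thesis .
  qed
  then show ?thesis
    using that by blast
qed

lemma control_along_trajectory_absolutely_integrable:
  fixes \<Psi> :: "'a::euclidean_space \<Rightarrow> 'a \<Rightarrow> real"
  assumes tr: "is_trajectory \<Psi> N f a T x0 v0 x v"
    and \<Psi>: "continuous_on UNIV (\<lambda>z. \<Psi> (fst z) (snd z))" and i: "i < N"
  shows "(\<lambda>t. f t (x i t, v i t)) absolutely_integrable_on {a..T}"
proof -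
  have "(\<lambda>t. (1 / real N) *\<^sub>R (\<Sum>j<N. \<Psi> (x i t) (x j t) *\<^sub>R (v j t - v i t)))
      absolutely_integrable_on {a..T}"
    using is_trajectory_continuous[OF tr] i
    by (intro absolutely_integrable_continuous_real continuous_on_alignment[OF \<Psi>]) auto
  then have "(\<lambda>t. cs_rhs \<Psi> N f x v i t - (1 / real N) *\<^sub>R (\<Sum>j<N. \<Psi> (x i t) (x j t) *\<^sub>R (v j t - v i t)))
      absolutely_integrable_on {a..T}"
    using tr i unfolding is_trajectory_def by (intro set_integral_diff(1)) auto
  then show ?thesis
    by (simp add: cs_rhs_def)
qed

definition running_cost ::
  "real \<Rightarrow> 'a \<Rightarrow> nat \<Rightarrow> (real \<Rightarrow> 'a \<times> 'a \<Rightarrow> 'a::euclidean_space)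
    \<Rightarrow> (nat \<Rightarrow> real \<Rightarrow> 'a) \<Rightarrow> (nat \<Rightarrow> real \<Rightarrow> 'a) \<Rightarrow> real \<Rightarrow> real" where
  "running_cost lam vbar N f x v t =
     sqnormN N (\<lambda>i. v i t - vbar) + lam * sqnormN N (\<lambda>i. f t (x i t, v i t))"

lemma cost_eq_integral_running_cost:
  "cost lam vbar N f x v a T = integral {a..T} (running_cost lam vbar N f x v)"
  by (simp add: cost_def running_cost_def[abs_def])

text \<open>The control is measurable along the trajectory and, by admissibility, a.e. bounded on the
  compact range of the trajectory.\<close>

lemma control_sqnormN_integrable:
  fixes \<Psi> :: "'a::euclidean_space \<Rightarrow> 'a \<Rightarrow> real"
  assumes adm: "admissible CB a T f" and tr: "is_trajectory \<Psi> N f a T x0 v0 x v"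
    and \<Psi>: "continuous_on UNIV (\<lambda>z. \<Psi> (fst z) (snd z))" and N: "N \<ge> 1"
  shows "(\<lambda>t. sqnormN N (\<lambda>i. f t (x i t, v i t))) integrable_on {a..T}"
proof -
  define H where "H t = sqnormN N (\<lambda>i. f t (x i t, v i t))" for t
  obtain M where M: "\<And>i t. i < N \<Longrightarrow> t \<in> {a..T} \<Longrightarrow> norm (x i t, v i t) \<le> M"
    using is_trajectory_bounded[OF tr] by blast
  have norm_meas: "(\<lambda>t. norm (f t (x i t, v i t))) \<in> borel_measurable (lebesgue_on {a..T})" if "i < N" for i
  proof (rule measurable_compose[OF _ borel_measurable_norm])
    show "(\<lambda>t. f t (x i t, v i t)) \<in> borel_measurable (lebesgue_on {a..T})"
      using control_along_trajectory_absolutely_integrable[OF tr \<Psi> that]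
      by (rule absolutely_integrable_imp_borel_measurable) simp
  qed
  have "(\<lambda>t. \<Sum>i<N. (norm (f t (x i t, v i t)))\<^sup>2) \<in> borel_measurable (lebesgue_on {a..T})"
    by (rule borel_measurable_sum, rule borel_measurable_power) (simp add: norm_meas)
  then have "H \<in> borel_measurable (lebesgue_on {a..T})"
    unfolding H_def sqnormN_def by (rule borel_measurable_divide[OF _ borel_measurable_const])
  moreover have "AE t in lebesgue_on {a..T}. norm (H t) \<le> norm ((CB + CB * M)\<^sup>2)"
    using admissible_growth_bound[OF adm] AE_space[of "lebesgue_on {a..T}"]
  proof eventually_elim
    case (elim t)
    then have t: "t \<in> {a..T}" and CB: "0 \<le> CB"
      and growth: "\<And>z. norm (f t z) \<le> CB + CB * norm z"
      by auto
    have "(norm (f t (x i t, v i t)))\<^sup>2 \<le> (CB + CB * M)\<^sup>2" if "i < N" for i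
    proof (rule power_mono)
      show "norm (f t (x i t, v i t)) \<le> CB + CB * M"
        using growth[of "(x i t, v i t)"] mult_left_mono[OF M[OF that t] CB] by linarith
    qed simp
    then have "H t \<le> (\<Sum>i<N. (CB + CB * M)\<^sup>2) / real N"
      unfolding H_def sqnormN_def by (intro divide_right_mono sum_mono) auto
    then show ?case
      using N sqnormN_nonneg[of N "\<lambda>i. f t (x i t, v i t)"] by (simp add: H_def)
  qed
  ultimately have "integrable (lebesgue_on {a..T}) H"
    by (rule Bochner_Integration.integrable_bound[OF Lebesgue_Measure.integrable_const_ivl])
  then show ?thesis
    unfolding H_def[symmetric] by (rule integrable_on_lebesgue_on) auto
qed

lemma running_cost_integrable:
  fixes \<Psi> :: "'a::euclidean_space \<Rightarrow> 'a \<Rightarrow> real"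
  assumes adm: "admissible CB a T f" and tr: "is_trajectory \<Psi> N f a T x0 v0 x v"
    and \<Psi>: "continuous_on UNIV (\<lambda>z. \<Psi> (fst z) (snd z))" and N: "N \<ge> 1"
  shows "running_cost lam vbar N f x v integrable_on {a..T}"
proof -
  have "(\<lambda>t. sqnormN N (\<lambda>i. v i t - vbar)) integrable_on {a..T}"
    unfolding sqnormN_def using is_trajectory_continuous[OF tr] N
    by (intro integrable_continuous_interval continuous_intros) auto
  from integrable_add[OF this integrable_on_cmult_left[OF control_sqnormN_integrable[OF adm tr \<Psi> N], of lam]]
  show ?thesis
    by (simp add: running_cost_def[abs_def])
qed

lemma cost_split:
  assumes "running_cost lam vbar N f x v integrable_on {a..T}" and "c \<in> {a..T}"
  shows "cost lam vbar N f x v a T = cost lam vbar N f x v a c + cost lam vbar N f x v c T"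
proof -
  have "a \<le> c" "c \<le> T"
    using assms(2) by auto
  from Henstock_Kurzweil_Integration.integral_combine[OF this assms(1)] show ?thesis
    by (simp add: cost_eq_integral_running_cost)
qed

section \<open>Concatenated controls and optimality\<close>

lemma concat_integral_equations:
  fixes f g h F G :: "real \<Rightarrow> 'b::euclidean_space"
  assumes c: "c \<in> {a..T}"
    and f: "f absolutely_integrable_on {a..T}" "\<And>t. t \<in> {a..T} \<Longrightarrow> (f has_integral (F t - F a)) {a..t}"
    and g: "g absolutely_integrable_on {c..T}" "\<And>t. t \<in> {c..T} \<Longrightarrow> (g has_integral (G t - G c)) {c..t}"
    and FG: "G c = F c"
    and hf: "\<And>t. t \<in> {a..c} \<Longrightarrow> t \<noteq> c \<Longrightarrow> h t = f t" and hg: "\<And>t. t \<in> {c..T} \<Longrightarrow> h t = g t"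
  shows "h absolutely_integrable_on {a..T}"
    and "\<And>t. t \<in> {a..T} \<Longrightarrow> (h has_integral ((if t \<le> c then F t else G t) - F a)) {a..t}"
proof -
  have c_le: "a \<le> c" "c \<le> T"
    using c by auto
  have before: "(h has_integral (F t - F a)) {a..t}" if "t \<in> {a..c}" for t
    using that c_le by (intro has_integral_spike[OF negligible_sing[of c] _ f(2)]) (auto intro: hf)
  have after: "(h has_integral (G t - G c)) {c..t}" if "t \<in> {c..T}" for t
    using that by (intro has_integral_spike[OF negligible_empty _ g(2)[OF that]]) (auto intro: hg)
  have f_ac: "f absolutely_integrable_on {a..c}"
    using absolutely_integrable_on_subinterval[OF f(1)] c_le by auto
  show "h absolutely_integrable_on {a..T}"
    using absolutely_integrable_spike[OF f_ac negligible_sing[of c]]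
      absolutely_integrable_spike[OF g(1) negligible_empty] hf hg
    by (intro absolutely_integrable_on_combine[OF _ _ c_le]) auto
  show "(h has_integral ((if t \<le> c then F t else G t) - F a)) {a..t}" if "t \<in> {a..T}" for t
  proof (cases "t \<le> c")
    case False
    then have "(h has_integral (F c - F a) + (G t - G c)) {a..t}"
      using that c_le by (intro has_integral_combine[OF c_le(1) _ before after]) auto
    then show ?thesis
      using False FG by simp
  qed (use that before in auto)
qed

lemma cs_rhs_concat_before:
  "t < c \<Longrightarrow> cs_rhs \<Psi> N (\<lambda>t. if t < c then f t else g t)
      (\<lambda>i t. if t \<le> c then x i t else y i t) (\<lambda>i t. if t \<le> c then v i t else w i t) i t
    = cs_rhs \<Psi> N f x v i t"
  by (simp add: cs_rhs_def)

lemma cs_rhs_concat_after: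
  assumes "\<And>j. j < N \<Longrightarrow> y j c = x j c \<and> w j c = v j c" and i: "i < N" and t: "c \<le> t"
  shows "cs_rhs \<Psi> N (\<lambda>t. if t < c then f t else g t)
      (\<lambda>i t. if t \<le> c then x i t else y i t) (\<lambda>i t. if t \<le> c then v i t else w i t) i t
    = cs_rhs \<Psi> N g y w i t"
proof -
  have after: "(if t \<le> c then x j t else y j t) = y j t" "(if t \<le> c then v j t else w j t) = w j t"
    if "j < N" for j
    using assms(1)[OF that] t by auto
  have "(\<Sum>j<N. \<Psi> (if t \<le> c then x i t else y i t) (if t \<le> c then x j t else y j t) *\<^sub>R
        ((if t \<le> c then v j t else w j t) - (if t \<le> c then v i t else w i t)))
      = (\<Sum>j<N. \<Psi> (y i t) (y j t) *\<^sub>R (w j t - w i t))"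
    by (intro sum.cong refl) (simp add: after i)
  then show ?thesis
    using t assms(1)[OF i] by (simp add: cs_rhs_def after[OF i])
qed

lemma is_trajectory_concat:
  assumes f: "is_trajectory \<Psi> N f a T x0 v0 x v"
    and g: "is_trajectory \<Psi> N g c T (\<lambda>i. x i c) (\<lambda>i. v i c) y w" and c: "c \<in> {a..T}"
  shows "is_trajectory \<Psi> N (\<lambda>t. if t < c then f t else g t) a T x0 v0
    (\<lambda>i t. if t \<le> c then x i t else y i t) (\<lambda>i t. if t \<le> c then v i t else w i t)"
    (is "is_trajectory \<Psi> N ?F a T x0 v0 ?X ?V")
proof -
  have g_init: "y i c = x i c \<and> w i c = v i c" if "i < N" for i
    using g that by (auto simp: is_trajectory_def)
  have "?X i a = x0 i \<and> ?V i a = v0 i \<and> ?V i absolutely_integrable_on {a..T}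
    \<and> cs_rhs \<Psi> N ?F ?X ?V i absolutely_integrable_on {a..T}
    \<and> (\<forall>t\<in>{a..T}. (?V i has_integral (?X i t - ?X i a)) {a..t}
                 \<and> (cs_rhs \<Psi> N ?F ?X ?V i has_integral (?V i t - ?V i a)) {a..t})" if i: "i < N" for i
  proof -
    from f i have x_init: "x i a = x0 i" and v_init: "v i a = v0 i"
      and fv: "v i absolutely_integrable_on {a..T}" and fa: "cs_rhs \<Psi> N f x v i absolutely_integrable_on {a..T}"
      and fx: "\<And>t. t \<in> {a..T} \<Longrightarrow> (v i has_integral (x i t - x i a)) {a..t}"
      and fv': "\<And>t. t \<in> {a..T} \<Longrightarrow> (cs_rhs \<Psi> N f x v i has_integral (v i t - v i a)) {a..t}"
      unfolding is_trajectory_def by blast+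
    from g i have gw: "w i absolutely_integrable_on {c..T}" and ga: "cs_rhs \<Psi> N g y w i absolutely_integrable_on {c..T}"
      and gy: "\<And>t. t \<in> {c..T} \<Longrightarrow> (w i has_integral (y i t - y i c)) {c..t}"
      and gw': "\<And>t. t \<in> {c..T} \<Longrightarrow> (cs_rhs \<Psi> N g y w i has_integral (w i t - w i c)) {c..t}"
      unfolding is_trajectory_def by blast+
    have V_before: "?V i t = v i t" if "t \<in> {a..c}" "t \<noteq> c" for t
      using that by auto
    have cs_before: "cs_rhs \<Psi> N ?F ?X ?V i t = cs_rhs \<Psi> N f x v i t" if "t \<in> {a..c}" "t \<noteq> c" for t
      using that by (intro cs_rhs_concat_before) auto
    have V_after: "?V i t = w i t" if "t \<in> {c..T}" for t
      using that g_init[OF i] by auto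
    have cs_after: "cs_rhs \<Psi> N ?F ?X ?V i t = cs_rhs \<Psi> N g y w i t" if "t \<in> {c..T}" for t
      using that g_init i by (intro cs_rhs_concat_after) auto
    have "?V i absolutely_integrable_on {a..T}"
      using c fv fx gw gy conjunct1[OF g_init[OF i]] V_before V_after
      by (rule concat_integral_equations(1))
    moreover have "(?V i has_integral (?X i t - ?X i a)) {a..t}" if "t \<in> {a..T}" for t
      using concat_integral_equations(2)[OF c fv fx gw gy conjunct1[OF g_init[OF i]] V_before V_after that] c
      by simp
    moreover have "cs_rhs \<Psi> N ?F ?X ?V i absolutely_integrable_on {a..T}"
      using c fa fv' ga gw' conjunct2[OF g_init[OF i]] cs_before cs_after
      by (rule concat_integral_equations(1))
    moreover have "(cs_rhs \<Psi> N ?F ?X ?V i has_integral (?V i t - ?V i a)) {a..t}" if "t \<in> {a..T}" for t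
      using concat_integral_equations(2)[OF c fa fv' ga gw' conjunct2[OF g_init[OF i]] cs_before cs_after that] c
      by simp
    ultimately show ?thesis
      using c x_init v_init by simp
  qed
  then show ?thesis
    unfolding is_trajectory_def by blast
qed

lemma cost_concat:
  assumes "\<And>i. i < N \<Longrightarrow> y i c = x i c \<and> w i c = v i c"
  shows "cost lam vbar N (\<lambda>t. if t < c then f t else g t)
      (\<lambda>i t. if t \<le> c then x i t else y i t) (\<lambda>i t. if t \<le> c then v i t else w i t) a c
      = cost lam vbar N f x v a c"
    and "cost lam vbar N (\<lambda>t. if t < c then f t else g t)
      (\<lambda>i t. if t \<le> c then x i t else y i t) (\<lambda>i t. if t \<le> c then v i t else w i t) c T
      = cost lam vbar N g y w c T"
  unfolding cost_eq_integral_running_cost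
proof -
  show "integral {a..c} (running_cost lam vbar N (\<lambda>t. if t < c then f t else g t)
      (\<lambda>i t. if t \<le> c then x i t else y i t) (\<lambda>i t. if t \<le> c then v i t else w i t))
    = integral {a..c} (running_cost lam vbar N f x v)"
    by (rule integral_spike[OF negligible_sing[of c]]) (auto simp: running_cost_def)
  have "running_cost lam vbar N (\<lambda>t. if t < c then f t else g t)
      (\<lambda>i t. if t \<le> c then x i t else y i t) (\<lambda>i t. if t \<le> c then v i t else w i t) t
    = running_cost lam vbar N g y w t" if "c \<le> t" for t
    using that assms unfolding running_cost_def
    by (intro arg_cong2[where f="\<lambda>p q. p + lam * q"] sqnormN_cong) auto
  then show "integral {c..T} (running_cost lam vbar N (\<lambda>t. if t < c then f t else g t)
      (\<lambda>i t. if t \<le> c then x i t else y i t) (\<lambda>i t. if t \<le> c then v i t else w i t))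
    = integral {c..T} (running_cost lam vbar N g y w)"
    by (intro integral_cong) auto
qed

text \<open>Compare \<open>f\<close> with the control that switches from \<open>f\<close> to \<open>g\<close> at time \<open>a\<close>: both have the
  same cost on \<open>[t\<^sub>0, a]\<close>.\<close>

lemma optimal_control_tail_le:
  fixes \<Psi> :: "'a::euclidean_space \<Rightarrow> 'a \<Rightarrow> real"
  assumes opt: "optimal_control \<Psi> CB lam vbar N t\<^sub>0 T x0 v0 f x v"
    and \<Psi>: "continuous_on UNIV (\<lambda>z. \<Psi> (fst z) (snd z))" and N: "N \<ge> 1" and a: "a \<in> {t\<^sub>0..T}"
    and adm_g: "admissible CB t\<^sub>0 T g" and tr_g: "is_trajectory \<Psi> N g a T (\<lambda>i. x i a) (\<lambda>i. v i a) y w"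
  shows "cost lam vbar N f x v a T \<le> cost lam vbar N g y w a T"
proof -
  have adm: "admissible CB t\<^sub>0 T f" and tr: "is_trajectory \<Psi> N f t\<^sub>0 T x0 v0 x v"
    and optimal: "\<And>g y w. admissible CB t\<^sub>0 T g \<Longrightarrow> is_trajectory \<Psi> N g t\<^sub>0 T x0 v0 y w \<Longrightarrow>
      cost lam vbar N f x v t\<^sub>0 T \<le> cost lam vbar N g y w t\<^sub>0 T"
    using opt unfolding optimal_control_def by blast+
  define h where "h = (\<lambda>t. if t < a then f t else g t)"
  define X where "X = (\<lambda>i t. if t \<le> a then x i t else y i t)"
  define V where "V = (\<lambda>i t. if t \<le> a then v i t else w i t)"
  have adm_h: "admissible CB t\<^sub>0 T h"
    unfolding h_def using adm adm_g by (rule admissible_concat)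
  have tr_h: "is_trajectory \<Psi> N h t\<^sub>0 T x0 v0 X V"
    unfolding h_def X_def V_def using tr tr_g a by (rule is_trajectory_concat)
  have init: "\<And>i. i < N \<Longrightarrow> y i a = x i a \<and> w i a = v i a"
    using tr_g by (simp add: is_trajectory_def)
  have "cost lam vbar N f x v t\<^sub>0 a + cost lam vbar N f x v a T = cost lam vbar N f x v t\<^sub>0 T"
    using cost_split[OF running_cost_integrable[OF adm tr \<Psi> N] a] by simp
  also have "\<dots> \<le> cost lam vbar N h X V t\<^sub>0 T"
    using optimal[OF adm_h tr_h] .
  also have "\<dots> = cost lam vbar N h X V t\<^sub>0 a + cost lam vbar N h X V a T"
    using cost_split[OF running_cost_integrable[OF adm_h tr_h \<Psi> N] a] .
  also have "\<dots> = cost lam vbar N f x v t\<^sub>0 a + cost lam vbar N g y w a T"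
    unfolding h_def X_def V_def
    using cost_concat[where N=N and y=y and c=a and x=x and w=w and v=v, OF init] by simp
  finally show ?thesis
    by simp
qed

theorem lemma3p1:
  fixes \<Psi> :: "'a::euclidean_space \<Rightarrow> 'a \<Rightarrow> real"
    and N :: nat and T lam C\<Psi> CB a :: real and vbar :: 'a
    and x0 v0 :: "nat \<Rightarrow> 'a" and fstar :: "real \<Rightarrow> 'a \<times> 'a \<Rightarrow> 'a"
    and x v :: "nat \<Rightarrow> real \<Rightarrow> 'a"
  assumes N: "N \<ge> 1" and T: "T > 0" and lam: "lam > 0"
    and Psi_lip: "\<exists>L. L-lipschitz_on UNIV (\<lambda>p. \<Psi> (fst p) (snd p))"
    and Psi_sym: "\<And>y z. \<Psi> y z = \<Psi> z y"
    and Psi_bnd: "\<And>y z. 0 \<le> \<Psi> y z \<and> \<Psi> y z \<le> C\<Psi>"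
    and CB: "CB \<ge> (1 + norm vbar) / sqrt lam"
    and opt: "optimal_control \<Psi> CB lam vbar N 0 T x0 v0 fstar x v"
    and a: "a \<in> {0..T}"
  shows "integral {a..T} (\<lambda>t. sqnormN N (\<lambda>i. v i t - vbar)
            + lam * sqnormN N (\<lambda>i. fstar t (x i t, v i t)))
         \<le> sqrt lam * sqnormN N (\<lambda>i. v i a - vbar)"
proof -
  obtain LP where lip: "LP-lipschitz_on UNIV (\<lambda>p. \<Psi> (fst p) (snd p))"
    using Psi_lip by blast
  define fb where "fb = linear_feedback (1 / sqrt lam) vbar"
  obtain y w where tr_fb: "is_trajectory \<Psi> N fb a T (\<lambda>i. x i a) (\<lambda>i. v i a) y w"
    and cost_fb: "cost lam vbar N fb y w a T \<le> sqrt lam * sqnormN N (\<lambda>i. v i a - vbar)"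
    using linear_feedback_cost_bound[OF lip Psi_sym Psi_bnd lam N, of a T vbar "\<lambda>i. x i a" "\<lambda>i. v i a"] a
    unfolding fb_def by auto
  have "admissible CB 0 T fb"
    unfolding fb_def using lam CB by (intro admissible_linear_feedback) (auto simp: field_simps)
  then have "cost lam vbar N fstar x v a T \<le> cost lam vbar N fb y w a T"
    using lipschitz_on_continuous_on[OF lip] N a tr_fb by (intro optimal_control_tail_le[OF opt]) auto
  with cost_fb show ?thesis
    unfolding cost_def by linarith
qed

end
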